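(* If a spherical curve $P$ has a coherent bigon, then $r(P)\le 2$.
   Context: A spherical curve is a smooth immersion $P:S^1\to S^2$ whose self-intersections are finitely many transverse double points, called crossings. It is oriented and has at least one crossing. Regions are the components of $S^2\setminus P(S^1)$, and edges are the arcs of the curve between consecutive crossings. An $n$-gon is a region bounded by $n$ edges; a bigon is a $2$-gon. A region is coherent if its boundary edges, with the orientations induced from $P$, all run in the same rotational direction around the region; otherwise it is incoherent. In Gauss-word terms, a bigon with crossings $y,z$ is coherent iff the word has the form $y z\,W_1\,z y\,W_2$, and incoherent iff it has the form $y z\,W_1\,y z\,W_2$. The Gauss word is the cyclic word of crossings met in one traversal of the curve; each crossing appears twice. Crossings $a,b$ are interlaced if their occurrences alternate $a\dots b\dots a\dots b$. A crossing is reducible if no crossing is interlaced with it; equivalently, only three distinct regions meet at it. $P$ is reducible if it has a reducible crossing, and reduced otherwise. The inverse-half-twisted splice $I$ at a crossing $p$ takes the curve with cyclic Gauss word $p\,A\,p\,B$ to the curve with Gauss word $\overline{A}\,B$, where $\overline{A}$ is $A$ reversed. Geometrically, $p$ is smoothed in the unique way giving a single closed curve, and the result is re-oriented. The reductivity $r(P)$ is the minimal number of successive applications of $I$ needed to reach a reducible spherical curve; $r(P)=0$ if $P$ is reducible. *)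

theory Defs
  imports Main
begin

text \<open>Combinatorial model of an oriented spherical curve (up to orientation-preserving
homeomorphism of the sphere): a Gauss word w (cyclic; each crossing occurs exactly twice)
together with a local orientation eps at every crossing, which fixes the cyclic
counterclockwise order of the four half-edges at the crossing.  This is a rotation
system of the 4-regular curve graph; the curve lies on the sphere iff the number of
faces equals V - E + 2 = n + 2 where n is the number of crossings (Euler).\<close>

definition gauss_word :: "'a list \<Rightarrow> bool" where
  "gauss_word w \<longleftrightarrow> w \<noteq> [] \<and> (\<forall>c\<in>set w. count_list w c = 2)"

definition fst_pos :: "'a list \<Rightarrow> 'a \<Rightarrow> nat" where
  "fst_pos w c = (LEAST i. i < length w \<and> w ! i = c)"

definition snd_pos :: "'a list \<Rightarrow> 'a \<Rightarrow> nat" where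
  "snd_pos w c = (GREATEST i. i < length w \<and> w ! i = c)"

text \<open>Edge i runs from position i to position (i+1) mod length w.
Half-edges: (j, True) = outgoing half-edge at position j (start of edge j),
(j, False) = incoming half-edge at position j (end of edge (j-1) mod length w).\<close>

definition rot :: "'a list \<Rightarrow> ('a \<Rightarrow> bool) \<Rightarrow> nat \<times> bool \<Rightarrow> nat \<times> bool" where
  "rot w eps h =
    (let c = w ! fst h; p = fst_pos w c; q = snd_pos w c in
     if eps c then
       (if h = (p, False) then (q, True) else if h = (q, True) then (p, True)
        else if h = (p, True) then (q, False) else (p, False))
     else
       (if h = (p, False) then (q, False) else if h = (q, False) then (p, True)
        else if h = (p, True) then (q, True) else (p, False)))"

text \<open>Darts: (i, True) = edge i traversed along the orientation of the curve,
(i, False) = edge i traversed against it.\<close>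

definition dart_end :: "'a list \<Rightarrow> nat \<times> bool \<Rightarrow> nat \<times> bool" where
  "dart_end w d = (if snd d then ((fst d + 1) mod length w, False) else (fst d, True))"

definition dart_of_start :: "'a list \<Rightarrow> nat \<times> bool \<Rightarrow> nat \<times> bool" where
  "dart_of_start w h = (if snd h then (fst h, True)
                        else ((fst h + length w - 1) mod length w, False))"

definition face_next :: "'a list \<Rightarrow> ('a \<Rightarrow> bool) \<Rightarrow> nat \<times> bool \<Rightarrow> nat \<times> bool" where
  "face_next w eps d = dart_of_start w (rot w eps (dart_end w d))"

definition darts :: "'a list \<Rightarrow> (nat \<times> bool) set" where
  "darts w = {0..<length w} \<times> UNIV"

definition face_of :: "'a list \<Rightarrow> ('a \<Rightarrow> bool) \<Rightarrow> nat \<times> bool \<Rightarrow> (nat \<times> bool) set" where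
  "face_of w eps d = {d'. \<exists>k. (face_next w eps ^^ k) d = d'}"

definition regions :: "'a list \<Rightarrow> ('a \<Rightarrow> bool) \<Rightarrow> (nat \<times> bool) set set" where
  "regions w eps = face_of w eps ` darts w"

definition spherical_curve :: "'a list \<Rightarrow> ('a \<Rightarrow> bool) \<Rightarrow> bool" where
  "spherical_curve w eps \<longleftrightarrow> gauss_word w \<and> card (regions w eps) = length w div 2 + 2"

text \<open>coherent bigon: a region bounded by two edges, both traversed in the same
rotational direction around the region (i.e. both darts agree with the curve
orientation, or both disagree)\<close>
definition has_coherent_bigon :: "'a list \<Rightarrow> ('a \<Rightarrow> bool) \<Rightarrow> bool" where
  "has_coherent_bigon w eps \<longleftrightarrow>
     (\<exists>F\<in>regions w eps. card F = 2 \<and> ((\<forall>d\<in>F. snd d) \<or> (\<forall>d\<in>F. \<not> snd d)))"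

text \<open>Gauss-word notions (words are cyclic, hence the rotations)\<close>
definition interlaced :: "'a list \<Rightarrow> 'a \<Rightarrow> 'a \<Rightarrow> bool" where
  "interlaced w a b \<longleftrightarrow> a \<noteq> b \<and>
     (\<exists>k A B. rotate k w = a # A @ a # B \<and> count_list A b = 1)"

definition reducible :: "'a list \<Rightarrow> bool" where
  "reducible w \<longleftrightarrow> (\<exists>c\<in>set w. \<not> (\<exists>d. interlaced w c d))"

definition splice_step :: "'a list \<Rightarrow> 'a list \<Rightarrow> bool" where
  "splice_step w w' \<longleftrightarrow> (\<exists>k p A B. rotate k w = p # A @ p # B \<and> w' = rev A @ B)"

definition reductivity :: "'a list \<Rightarrow> nat" where
  "reductivity w = (LEAST k. \<exists>w'. (splice_step ^^ k) w w' \<and> reducible w')"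

end

theory Submission
  imports Defs
begin

text \<open>
  A coherent bigon is a face of the curve whose two darts both run along
  (or both against) the orientation.  Following the face around, each dart of it turns at a
  crossing onto the other occurrence of that crossing, which forces the cyclic Gauss word to
  contain the pattern  y z W1 z y W2  (or, in a degenerate case, a doubled letter  c c).

  A doubled letter  c c  makes  c  interlaced with nothing, so the word is reducible.  In the
  pattern  y z W1 z y W2  with the crossing  y  not reducible, some  x  interlaced with  y
  occurs once in W1 and once in W2, i.e. the word is  y z P x Q z y R x S.  Splicing at  x
  and then at  y  yields  rev S @ Q @ z z P @ rev R, which contains the doubled letter  z z;
  hence the reductivity is at most 2.
\<close>

lemma count_list_rotate [simp]: "count_list (rotate n xs) x = count_list xs x"
  by (metis count_list_append append_take_drop_id add.commute rotate_drop_take)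

lemma count_list_two_split:
  assumes "count_list xs c = 2"
  obtains X Y Z where "xs = X @ c # Y @ c # Z" "c \<notin> set X" "c \<notin> set Y" "c \<notin> set Z"
proof -
  obtain X R where "xs = X @ c # R" "c \<notin> set X" "count_list R c = 1"
    using assms count_list_Suc_split_first[of xs c 1] by auto
  moreover obtain Y Z where "R = Y @ c # Z" "c \<notin> set Y" "count_list Z c = 0"
    using \<open>count_list R c = 1\<close> count_list_Suc_split_first[of R c 0] by auto
  ultimately show ?thesis using that by (simp add: count_list_0_iff)
qed

lemma nth_twice_occurring:
  assumes "c \<notin> set X" "c \<notin> set Y" "c \<notin> set Z"
    and "k < length (X @ c # Y @ c # Z)" "(X @ c # Y @ c # Z) ! k = c"
  shows "k = length X \<or> k = Suc (length X + length Y)"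
  using assms by (auto simp: nth_append nth_Cons' split: if_splits dest: nth_mem)

lemma list_two_heads: "2 \<le> length xs \<Longrightarrow> xs = xs ! 0 # xs ! 1 # drop 2 xs"
  by (cases xs; cases "tl xs") auto

lemma list_split_at_pairs:
  assumes "2 \<le> t" "Suc t < length u"
  shows "u = u ! 0 # u ! 1 # take (t - 2) (drop 2 u) @ u ! t # u ! Suc t # drop (Suc (Suc t)) u"
proof -
  have "drop t u = u ! t # u ! Suc t # drop (Suc (Suc t)) u"
    using assms by (simp add: Cons_nth_drop_Suc)
  moreover have "take t u = take 2 u @ take (t - 2) (drop 2 u)"
    using assms(1) by (metis le_add_diff_inverse take_add)
  moreover have "take 2 u = [u ! 0, u ! 1]"
    using assms list_two_heads[of u] by (metis numeral_2_eq_2 take0 take_Suc_Cons Suc_leI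
      Suc_lessD order.strict_trans1)
  ultimately show ?thesis by (metis append_Cons append_Nil append_take_drop_id)
qed

lemma rotation_between_rotations:
  "\<exists>d. rotate m' xs = rotate d (rotate m xs)"
proof (cases "xs = []")
  case False
  define n where "n = length xs"
  have "(m' + (n - m mod n) + m) mod n = m' mod n"
  proof -
    have "m mod n < n" "n * (m div n) + m mod n = m"
      using False unfolding n_def by simp_all
    then have "m' + (n - m mod n) + m = m' + n * Suc (m div n)"
      unfolding mult_Suc_right by linarith
    then show ?thesis by (metis mod_mult_self2)
  qed
  then have "rotate (m' + (n - m mod n)) (rotate m xs) = rotate m' xs"
    by (metis n_def rotate_conv_mod rotate_rotate)
  then show ?thesis by metis
qed simp

lemma cyclic_split_unique:
  assumes "count_list xs a = 2"
    and "rotate m xs = a # A @ a # B" and "rotate m' xs = a # A' @ a # B'"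
  shows "(A' = A \<and> B' = B) \<or> (A' = B \<and> B' = A)"
proof -
  let ?L = "a # A @ a # B"
  have notin: "a \<notin> set A" "a \<notin> set B" "a \<notin> set A'" "a \<notin> set B'"
    using assms count_list_rotate[of m xs a] count_list_rotate[of m' xs a]
    by (auto simp: count_list_0_iff [symmetric])
  obtain d where "rotate d ?L = a # A' @ a # B'"
    using rotation_between_rotations[of m' xs m] assms(2,3) by metis
  moreover define j where "j = d mod length ?L"
  ultimately have rot: "drop j ?L @ take j ?L = a # A' @ a # B'"
    by (simp add: rotate_drop_take)
  have "j < length ?L" unfolding j_def by simp
  then have "?L ! j = a"
    using rot by (metis hd_append2 hd_drop_conv_nth list.sel(1) drop_eq_Nil not_le)
  then have "j = 0 \<or> j = Suc (length A)"
    using nth_twice_occurring[of a "[]" A B j] notin \<open>j < length ?L\<close> by simp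
  then have "a # A' @ a # B' = ?L \<or> a # A' @ a # B' = a # B @ a # A"
    using rot by auto
  then show ?thesis using notin by (metis append_Cons_eq_iff list.inject)
qed

lemma orbit_card_two:
  assumes "card {y. \<exists>k. (f ^^ k) x = y} = 2"
  shows "f x \<noteq> x" "f (f x) = x \<or> f (f x) = f x"
proof -
  let ?O = "{y. \<exists>k. (f ^^ k) x = y}"
  have mem: "(f ^^ k) x \<in> ?O" for k by blast
  have fin: "finite ?O" using assms by (metis card.infinite zero_neq_numeral)
  show ne: "f x \<noteq> x"
  proof
    assume "f x = x"
    then have "(f ^^ k) x = x" for k by (induction k) auto
    then have "?O = {x}" by auto
    then show False using assms by simp
  qed
  have "{x, f x} \<subseteq> ?O" using mem[of 0] mem[of 1] by simp
  moreover have "card {x, f x} = 2" using ne by simp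
  ultimately have "?O = {x, f x}" using fin assms by (metis card_subset_eq)
  then show "f (f x) = x \<or> f (f x) = f x" using mem[of 2] by (simp add: numeral_2_eq_2)
qed

lemma gauss_word_count: "gauss_word w \<Longrightarrow> count_list w c = 0 \<or> count_list w c = 2"
  unfolding gauss_word_def by (metis count_list_0_iff)

text \<open>A nonempty splice of a Gauss word is again a Gauss word: the spliced crossing disappears,
  all other letters keep their two occurrences.\<close>

lemma gauss_word_splice:
  assumes g: "gauss_word w" and r: "rotate k w = p # A @ p # B" and ne: "rev A @ B \<noteq> []"
  shows "gauss_word (rev A @ B)"
  unfolding gauss_word_def
proof (intro conjI ballI ne)
  fix c assume c: "c \<in> set (rev A @ B)"
  have cnt: "count_list w d = count_list (p # A @ p # B) d" for d
    using r count_list_rotate[of k w d] by simp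
  have "count_list w p = 2" using g r unfolding gauss_word_def by (metis list.set_intros(1) set_rotate)
  then have "p \<notin> set A" "p \<notin> set B" using cnt[of p] by (auto simp: count_list_0_iff [symmetric])
  then have "c \<noteq> p" "c \<in> set w" using c r by (auto dest: arg_cong[of _ _ set])
  then show "count_list (rev A @ B) c = 2"
    using cnt[of c] g unfolding gauss_word_def by simp
qed

text \<open>A doubled letter  c c  in a cyclic Gauss word is interlaced with nothing, so the word
  is reducible.\<close>

lemma reducible_if_doubled:
  assumes g: "gauss_word w" and r: "rotate j w = c # c # V"
  shows "reducible w"
proof -
  have c: "c \<in> set w" using r by (metis list.set_intros(1) set_rotate)
  then have cc: "count_list w c = 2" using g unfolding gauss_word_def by blast
  have "\<not> interlaced w c d" for d
  proof
    assume "interlaced w c d"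
    then obtain k A B where "c \<noteq> d" "rotate k w = c # A @ c # B" "count_list A d = 1"
      unfolding interlaced_def by blast
    moreover have "rotate j w = c # [] @ c # V" using r by simp
    ultimately have "A = V" "count_list V d = count_list w d"
      using cyclic_split_unique[OF cc] r count_list_rotate[of j w d] by fastforce+
    then show False using \<open>count_list A d = 1\<close> gauss_word_count[OF g, of d] by simp
  qed
  then show ?thesis unfolding reducible_def using c by blast
qed

lemma reductivity_le:
  "(splice_step ^^ m) w w' \<Longrightarrow> reducible w' \<Longrightarrow> reductivity w \<le> m"
  unfolding reductivity_def by (intro Least_le) blast

text \<open>The heart of the argument: in  y z P x Q z y R x S, splicing at  x  gives
  rev R @ y z (rev Q @ S) y z P, and then splicing at  y  gives  rev S @ Q @ z z P @ rev R,
  which contains the doubled letter  z z.\<close>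

lemma bigon_double_splice:
  assumes g: "gauss_word w" and r: "rotate k w = y # z # P @ x # Q @ z # y # R @ x # S"
  shows "reductivity w \<le> 2"
proof -
  define w1 where "w1 = rev (Q @ z # y # R) @ S @ y # z # P"
  define w2 where "w2 = rev (z # rev Q @ S) @ z # P @ rev R"
  have r1: "rotate (length (y # z # P) + k) w = x # (Q @ z # y # R) @ x # S @ y # z # P"
    by (simp add: rotate_rotate [symmetric] r rotate_append [of "y # z # P", simplified])
  then have s1: "splice_step w w1" unfolding splice_step_def w1_def by blast
  have g1: "gauss_word w1" using gauss_word_splice[OF g r1] unfolding w1_def by simp
  have r2: "rotate (length R) w1 = y # (z # rev Q @ S) @ y # z # P @ rev R"
    unfolding w1_def by (simp add: rotate_append [of "rev R", simplified])
  then have s2: "splice_step w1 w2" unfolding splice_step_def w2_def by blast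
  have g2: "gauss_word w2" using gauss_word_splice[OF g1 r2] unfolding w2_def by simp
  have "rotate (length (rev S @ Q)) w2 = z # z # P @ rev R @ rev S @ Q"
    unfolding w2_def by (simp add: rotate_append [of "rev S @ Q", simplified])
  then have "reducible w2" by (rule reducible_if_doubled[OF g2])
  with s1 s2 have "(splice_step ^^ 2) w w2" "reducible w2"
    by (auto simp: numeral_2_eq_2 relcompp_apply)
  then show ?thesis by (rule reductivity_le)
qed

text \<open>A Gauss word of the form  y z W1 z y W2  (the word of a coherent bigon) has reductivity
  at most 2: either it is already reducible, or a crossing  x  interlaced with  y  splits both
  W1 and W2, and the two-splice argument applies.\<close>

lemma coherent_bigon_word_reductivity:
  assumes g: "gauss_word w" and r: "rotate k w = y # z # W1 @ z # y # W2"
  shows "reductivity w \<le> 2"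
proof (cases "reducible w")
  case True
  then show ?thesis using reductivity_le[of 0 w w] by simp
next
  case False
  have cnt: "count_list w c = count_list (y # z # W1 @ z # y # W2) c" for c
    using r count_list_rotate[of k w c] by simp
  have "y \<in> set w" "z \<in> set w" using r by (metis list.set_intros set_rotate)+
  then have cy: "count_list w y = 2" and cz: "count_list w z = 2"
    using g unfolding gauss_word_def by blast+
  then have yz: "y \<noteq> z" using cnt[of y] by auto
  then have zW: "count_list W1 z = 0" "count_list W2 z = 0" using cz cnt[of z] by auto
  from False \<open>y \<in> set w\<close> obtain x where "interlaced w y x"
    unfolding reducible_def by blast
  then obtain k' A B where xy: "x \<noteq> y" and r': "rotate k' w = y # A @ y # B"
    and xA: "count_list A x = 1"
    unfolding interlaced_def by metis
  have "rotate k w = y # (z # W1 @ [z]) @ y # W2" using r by simp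
  then have A: "A = z # W1 @ [z] \<or> A = W2" using cyclic_split_unique[OF cy _ r'] by blast
  then have xz: "x \<noteq> z" using xA zW by auto
  then have "count_list W1 x = 1 \<or> count_list W2 x = 1" using A xA by auto
  moreover have "count_list W1 x + count_list W2 x = 0 \<or> count_list W1 x + count_list W2 x = 2"
    using gauss_word_count[OF g, of x] cnt[of x] xy xz by simp
  ultimately have "count_list W1 x = 1" "count_list W2 x = 1" by auto
  then have "x \<in> set W1" "x \<in> set W2" by (metis count_notin zero_neq_one)+
  then obtain P Q R S where "W1 = P @ x # Q" "W2 = R @ x # S" by (meson split_list)
  then show ?thesis using bigon_double_splice[OF g] r by simp
qed

definition edge_turn :: "'a list \<Rightarrow> nat \<Rightarrow> nat \<Rightarrow> bool" where
  "edge_turn w i j \<longleftrightarrow> i < length w \<and> j < length w \<and>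
     w ! j = w ! (Suc i mod length w) \<and> j \<noteq> Suc i mod length w"

lemma edge_turn_self_reducible:
  assumes g: "gauss_word w" and turn: "edge_turn w j j"
  shows "reducible w"
proof -
  define n where "n = length w"
  have j: "j < n" and eq: "w ! j = w ! (Suc j mod n)" and ne: "j \<noteq> Suc j mod n"
    using turn unfolding edge_turn_def n_def by auto
  have "n \<noteq> 1" using j ne by auto
  then have n: "2 \<le> n" using j by linarith
  have "0 < length w" "1 < length w" using n n_def by linarith+
  then have "rotate j w ! 0 = w ! j" "rotate j w ! 1 = w ! (Suc j mod n)"
    using j unfolding n_def by (simp_all add: nth_rotate)
  then have "rotate j w = w ! j # w ! j # drop 2 (rotate j w)"
    using list_two_heads[of "rotate j w"] eq n n_def by simp
  then show ?thesis by (rule reducible_if_doubled[OF g])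
qed

lemma edge_turns_bigon_word:
  assumes ij: "edge_turn w i j" and ji: "edge_turn w j i" and ne: "i \<noteq> j"
  shows "\<exists>k y z W1 W2. rotate k w = y # z # W1 @ z # y # W2"
proof -
  define n where "n = length w"
  have i: "i < n" and j: "j < n" and
    eqj: "w ! j = w ! (Suc i mod n)" and nej: "j \<noteq> Suc i mod n" and
    eqi: "w ! i = w ! (Suc j mod n)" and nei: "i \<noteq> Suc j mod n"
    using ij ji unfolding edge_turn_def n_def by auto
  define t where "t = (j + n - i) mod n"
  have t: "t < n" using i unfolding t_def by simp
  have at_t: "(i + t) mod n = j" using i j unfolding t_def by (simp add: mod_add_right_eq)
  then have at_Suc_t: "(i + Suc t) mod n = Suc j mod n" by (metis add_Suc_right mod_Suc_eq)
  have "t \<noteq> 0" using at_t i ne by (metis add_0_right mod_less)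
  moreover have "t \<noteq> 1" using at_t nej by auto
  moreover have "Suc t \<noteq> n" using at_Suc_t i nei by (metis mod_add_self2 mod_less)
  ultimately have t2: "2 \<le> t" and t3: "Suc t < n" using t by auto
  define u where "u = rotate i w"
  have u: "u ! k = w ! ((i + k) mod n)" if "k < n" for k
    unfolding u_def n_def using that n_def by (simp add: nth_rotate)
  have "u ! 0 = w ! i" "u ! 1 = w ! j" "u ! t = w ! j" "u ! Suc t = w ! i"
    using u[of 0] u[of 1] u[of t] u[of "Suc t"] i t2 t3 eqj eqi at_t at_Suc_t by simp_all
  then have "rotate i w =
      w ! i # w ! j # take (t - 2) (drop 2 u) @ w ! j # w ! i # drop (Suc (Suc t)) u"
    using list_split_at_pairs[OF t2, of u] t3 unfolding u_def n_def by simp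
  then show ?thesis by blast
qed

lemma gauss_word_positions:
  assumes g: "gauss_word w" and c: "c \<in> set w"
  shows "fst_pos w c < snd_pos w c" "snd_pos w c < length w"
    "w ! fst_pos w c = c" "w ! snd_pos w c = c"
    "\<And>k. k < length w \<Longrightarrow> w ! k = c \<Longrightarrow> k = fst_pos w c \<or> k = snd_pos w c"
proof -
  have "count_list w c = 2" using g c unfolding gauss_word_def by blast
  then obtain X Y Z where w: "w = X @ c # Y @ c # Z"
    and notin: "c \<notin> set X" "c \<notin> set Y" "c \<notin> set Z"
    by (rule count_list_two_split)
  define p where "p = length X"
  define q where "q = Suc (length X + length Y)"
  have at: "p < q" "q < length w" "w ! p = c" "w ! q = c"
    unfolding w p_def q_def by (auto simp: nth_append)
  have only: "k = p \<or> k = q" if "k < length w" "w ! k = c" for k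
    using nth_twice_occurring[OF notin] that unfolding w p_def q_def by blast
  have "fst_pos w c = p" unfolding fst_pos_def
    by (rule Least_equality) (use at only in fastforce)+
  moreover have "snd_pos w c = q" unfolding snd_pos_def
    by (rule Greatest_equality) (use at only in fastforce)+
  ultimately show "fst_pos w c < snd_pos w c" "snd_pos w c < length w"
    "w ! fst_pos w c = c" "w ! snd_pos w c = c"
    "\<And>k. k < length w \<Longrightarrow> w ! k = c \<Longrightarrow> k = fst_pos w c \<or> k = snd_pos w c"
    using at only by auto
qed

lemma face_next_coherent:
  assumes g: "gauss_word w" and i: "i < length w"
    and step: "face_next w eps (i, b) = (j, b)"
  shows "if b then edge_turn w i j else edge_turn w j i"
proof -
  define n where "n = length w"
  have n: "0 < n" using i n_def by linarith
  show ?thesis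
  proof (cases b)
    case True
    define i' where "i' = Suc i mod n"
    define c where "c = w ! i'"
    have i': "i' < n" using n i'_def by simp
    then have c: "c \<in> set w" using c_def n_def by simp
    note P = gauss_word_positions[OF g c]
    have "i' = fst_pos w c \<or> i' = snd_pos w c" using P(5) i' c_def n_def by blast
    moreover have "dart_of_start w (rot w eps (i', False)) = (j, True)"
      using step True unfolding face_next_def dart_end_def i'_def n_def by simp
    ultimately have "if eps c then i' = fst_pos w c \<and> j = snd_pos w c
                     else i' = snd_pos w c \<and> j = fst_pos w c"
      using P(1,3,4) unfolding dart_of_start_def rot_def Let_def c_def [symmetric]
      by (auto split: if_splits)
    then show ?thesis using True P i c_def i'_def n_def unfolding edge_turn_def
      by (auto split: if_splits)
  next
    case False
    define c where "c = w ! i"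
    have c: "c \<in> set w" using i c_def by simp
    note P = gauss_word_positions[OF g c]
    have "i = fst_pos w c \<or> i = snd_pos w c" using P(5) i c_def by blast
    moreover have "dart_of_start w (rot w eps (i, True)) = (j, False)"
      using step False unfolding face_next_def dart_end_def by simp
    ultimately obtain m where m: "m = fst_pos w c \<or> m = snd_pos w c" "m \<noteq> i"
      and j: "j = (m + n - 1) mod n"
      using P(1,3,4) unfolding dart_of_start_def rot_def Let_def c_def [symmetric] n_def
      by (auto split: if_splits)
    have "m < n" using m P(1,2) n_def by auto
    then have "Suc j mod n = m" using j by (cases m) (simp_all add: mod_Suc)
    then show ?thesis using False m P i j n c_def n_def unfolding edge_turn_def by auto
  qed
qed

lemma coherent_bigon_turns:
  assumes g: "gauss_word w" and bigon: "has_coherent_bigon w eps"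
  shows "(\<exists>i j. i \<noteq> j \<and> edge_turn w i j \<and> edge_turn w j i) \<or> (\<exists>j. edge_turn w j j)"
proof -
  let ?f = "face_next w eps"
  obtain F d0 where d0: "d0 \<in> darts w" and F: "F = face_of w eps d0" and "card F = 2"
    and coherent: "(\<forall>d\<in>F. snd d) \<or> (\<forall>d\<in>F. \<not> snd d)"
    using bigon unfolding has_coherent_bigon_def regions_def by blast
  then have "card {d. \<exists>k. (?f ^^ k) d0 = d} = 2" unfolding face_of_def by simp
  note orbit = orbit_card_two[OF this]
  have inF: "(?f ^^ k) d0 \<in> F" for k unfolding F face_of_def by blast
  define i j b where "i = fst d0" and "j = fst (?f d0)" and "b = snd d0"
  have "snd (?f d0) = b" using coherent inF[of 0] inF[of 1] unfolding b_def by auto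
  then have d0_eq: "d0 = (i, b)" and d1_eq: "?f d0 = (j, b)"
    unfolding i_def j_def b_def by (simp_all add: prod_eq_iff)
  have "?f (?f d0) = (i, b) \<or> ?f (?f d0) = (j, b)" using orbit(2) d0_eq d1_eq by simp
  then have d2_eq: "?f (j, b) = (i, b) \<or> ?f (j, b) = (j, b)" using d1_eq by simp
  have i: "i < length w" using d0 d0_eq unfolding darts_def by simp
  have ij: "i \<noteq> j" using orbit(1) d0_eq d1_eq by auto
  have turn1: "if b then edge_turn w i j else edge_turn w j i"
    using face_next_coherent[OF g i] d0_eq d1_eq by simp
  then have j: "j < length w" unfolding edge_turn_def by (simp split: if_splits)
  from d2_eq show ?thesis
  proof
    assume "?f (j, b) = (i, b)"
    then have "if b then edge_turn w j i else edge_turn w i j"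
      using face_next_coherent[OF g j] by simp
    then show ?thesis using turn1 ij by (metis (full_types))
  next
    assume "?f (j, b) = (j, b)"
    then have "if b then edge_turn w j j else edge_turn w j j"
      by (rule face_next_coherent[OF g j])
    then show ?thesis by (metis (full_types))
  qed
qed

theorem mainTheorem3:
  fixes w :: "'a list" and eps :: "'a \<Rightarrow> bool"
  assumes "spherical_curve w eps"
    and "has_coherent_bigon w eps"
  shows "reductivity w \<le> 2"
proof -
  have g: "gauss_word w" using assms(1) unfolding spherical_curve_def by blast
  from coherent_bigon_turns[OF g assms(2)] show ?thesis
  proof
    assume "\<exists>i j. i \<noteq> j \<and> edge_turn w i j \<and> edge_turn w j i"
    then obtain k y z W1 W2 where "rotate k w = y # z # W1 @ z # y # W2"
      using edge_turns_bigon_word by blast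
    then show ?thesis by (rule coherent_bigon_word_reductivity[OF g])
  next
    assume "\<exists>j. edge_turn w j j"
    then have "reducible w" using edge_turn_self_reducible[OF g] by blast
    then have "reductivity w \<le> 0" using reductivity_le[of 0 w w] by simp
    then show ?thesis by simp
  qed
qed

end
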